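(* Let $D$ be an infinite commutative unital integral domain. The graded pair $(R,S)$ is relatively free in the variety of graded pairs determined by $Id(M_2(D),sl_2(D))$. That is: $(R,S)$ satisfies every weak graded identity of $(M_2(D),sl_2(D))$, and for every graded pair $(A,L)$ satisfying all weak graded identities of $(M_2(D),sl_2(D))$ and every choice of elements $a_i\in L\cap A^{(0)}$, $b_i\in L\cap A^{(1)}$ ($i\ge1$), there is a unique homomorphism of graded unital algebras $\psi\colon R\to A$ with $\psi(Y_i)=a_i$, $\psi(Z_i)=b_i$ for all $i$, and it satisfies $\psi(S)\subseteq L$.
   Context: Let $Y=\{y_1,y_2,\dots\}$ and $Z=\{z_1,z_2,\dots\}$ be disjoint countable sets of variables, $X=Y\cup Z$, and let $D\langle X\rangle$ be the free unital associative $D$-algebra on $X$, $\mathbb{Z}_2$-graded by declaring the $y_i$ even and the $z_i$ odd (a monomial is even iff it contains an even number of letters from $Z$, counted with multiplicity). Let $L\langle X\rangle$ be the Lie subalgebra of $D\langle X\rangle$ (with bracket $[a,b]=ab-ba$) generated by $X$, with the induced grading $L\langle X\rangle^{(0)}\oplus L\langle X\rangle^{(1)}$. A graded pair $(A,L)$ consists of a $\mathbb{Z}_2$-graded associative unital $D$-algebra $A=A^{(0)}\oplus A^{(1)}$ and a Lie subalgebra $L$ of $A$ (under the commutator) with $L=(L\cap A^{(0)})\oplus(L\cap A^{(1)})$. A polynomial $f(y_1,\dots,y_k,z_1,\dots,z_m)\in D\langle X\rangle$ is a weak graded identity of $(A,L)$ if $f$ vanishes under every substitution of each $y_i$ by an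 element of $L\cap A^{(0)}$ and each $z_j$ by an element of $L\cap A^{(1)}$; $Id(A,L)$ denotes the set of all weak graded identities of $(A,L)$. $M_2(D)$ is graded with diagonal matrices even and off-diagonal matrices odd, and $sl_2(D)$ (traceless matrices) carries the induced grading. Let $\mathcal{A}=D[\alpha_i,\beta_i,\gamma_i\mid i\ge1]$ be the commutative polynomial ring and in $M_2(\mathcal A)$ put $Y_i=\begin{pmatrix}\alpha_i&0\\0&-\alpha_i\end{pmatrix}$, $Z_i=\begin{pmatrix}0&\beta_i\\ \gamma_i&0\end{pmatrix}$. Let $R$ be the unital associative subalgebra of $M_2(\mathcal A)$ generated by all $Y_i,Z_i$, and $S$ the Lie subalgebra (under the commutator) generated by them; $R=R_0\oplus R_1$ is graded with the $Y_i$ even and the $Z_i$ odd, and $S$ has the induced grading $S_i=S\cap R_i$. *)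

theory Defs
  imports "HOL-Library.Poly_Mapping"
begin

datatype 'r mat2 = Mat2 (m11: 'r) (m12: 'r) (m21: 'r) (m22: 'r)

instantiation mat2 :: (comm_ring_1) ring_1
begin
definition "0 = Mat2 0 0 0 0"
definition "1 = Mat2 1 0 0 1"
definition "A + B = Mat2 (m11 A + m11 B) (m12 A + m12 B) (m21 A + m21 B) (m22 A + m22 B)"
definition "A - B = Mat2 (m11 A - m11 B) (m12 A - m12 B) (m21 A - m21 B) (m22 A - m22 B)"
definition "- A = Mat2 (- m11 A) (- m12 A) (- m21 A) (- m22 A)"
definition "A * B = Mat2 (m11 A * m11 B + m12 A * m21 B) (m11 A * m12 B + m12 A * m22 B)
                         (m21 A * m11 B + m22 A * m21 B) (m21 A * m12 B + m22 A * m22 B)"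
instance
  by standard (auto simp: zero_mat2_def one_mat2_def plus_mat2_def minus_mat2_def
      uminus_mat2_def times_mat2_def algebra_simps intro: mat2.expand)
end

definition mat2_scale :: "'r::comm_ring_1 \<Rightarrow> 'r mat2 \<Rightarrow> 'r mat2" where
  "mat2_scale c A = Mat2 (c * m11 A) (c * m12 A) (c * m21 A) (c * m22 A)"

text \<open>The grading of M_2: diagonal matrices even, off-diagonal odd; sl_2 = traceless.\<close>
definition diag2 :: "'r::comm_ring_1 mat2 set" where
  "diag2 = {A. m12 A = 0 \<and> m21 A = 0}"
definition offdiag2 :: "'r::comm_ring_1 mat2 set" where
  "offdiag2 = {A. m11 A = 0 \<and> m22 A = 0}"
definition sl2 :: "'r::comm_ring_1 mat2 set" where
  "sl2 = {A. m11 A + m22 A = 0}"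

text \<open>Variables: Yv i (even, y_{i+1}) and Zv i (odd, z_{i+1}).
  A noncommutative polynomial is a finitely supported map from words to coefficients.\<close>
datatype xvar = Yv nat | Zv nat

type_synonym 'a ncpoly = "xvar list \<Rightarrow>\<^sub>0 'a"

definition nc_eval :: "('a \<Rightarrow> 'b \<Rightarrow> 'b) \<Rightarrow> (xvar \<Rightarrow> 'b::ring_1) \<Rightarrow> 'a::zero ncpoly \<Rightarrow> 'b" where
  "nc_eval smul \<sigma> f = (\<Sum>w\<in>Poly_Mapping.keys f. smul (Poly_Mapping.lookup f w) (prod_list (map \<sigma> w)))"

text \<open>Id(A,L): weak graded identities, given the even part L0 = L \<inter> A^(0) and odd part
  L1 = L \<inter> A^(1).\<close>
definition weak_ids :: "('a \<Rightarrow> 'b \<Rightarrow> 'b) \<Rightarrow> 'b::ring_1 set \<Rightarrow> 'b set \<Rightarrow> 'a::zero ncpoly set" where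
  "weak_ids smul L0 L1 = {f. \<forall>\<sigma>. (\<forall>i. \<sigma> (Yv i) \<in> L0) \<and> (\<forall>i. \<sigma> (Zv i) \<in> L1)
        \<longrightarrow> nc_eval smul \<sigma> f = 0}"

definition d_algebra :: "('a::comm_ring_1 \<Rightarrow> 'b::ring_1 \<Rightarrow> 'b) \<Rightarrow> bool" where
  "d_algebra smul \<longleftrightarrow>
     (\<forall>a b x. smul a (smul b x) = smul (a * b) x) \<and> (\<forall>x. smul 1 x = x) \<and>
     (\<forall>a b x. smul (a + b) x = smul a x + smul b x) \<and>
     (\<forall>a x y. smul a (x + y) = smul a x + smul a y) \<and>
     (\<forall>a x y. smul a (x * y) = smul a x * y) \<and>
     (\<forall>a x y. smul a (x * y) = x * smul a y)"

definition d_submodule :: "('a \<Rightarrow> 'b \<Rightarrow> 'b) \<Rightarrow> 'b::ring_1 set \<Rightarrow> bool" where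
  "d_submodule smul M \<longleftrightarrow> 0 \<in> M \<and> (\<forall>x\<in>M. \<forall>y\<in>M. x + y \<in> M) \<and> (\<forall>a. \<forall>x\<in>M. smul a x \<in> M)"

text \<open>A Z_2-graded unital associative D-algebra A = A0 \<oplus> A1 (carrier: the whole type).\<close>
definition graded_algebra :: "('a::comm_ring_1 \<Rightarrow> 'b::ring_1 \<Rightarrow> 'b) \<Rightarrow> 'b set \<Rightarrow> 'b set \<Rightarrow> bool" where
  "graded_algebra smul A0 A1 \<longleftrightarrow> d_algebra smul \<and> d_submodule smul A0 \<and> d_submodule smul A1 \<and>
     (\<forall>x. \<exists>x0\<in>A0. \<exists>x1\<in>A1. x = x0 + x1) \<and> A0 \<inter> A1 = {0} \<and>
     (\<forall>x\<in>A0. \<forall>y\<in>A0. x * y \<in> A0) \<and> (\<forall>x\<in>A0. \<forall>y\<in>A1. x * y \<in> A1) \<and>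
     (\<forall>x\<in>A1. \<forall>y\<in>A0. x * y \<in> A1) \<and> (\<forall>x\<in>A1. \<forall>y\<in>A1. x * y \<in> A0)"

definition graded_pair :: "('a::comm_ring_1 \<Rightarrow> 'b::ring_1 \<Rightarrow> 'b) \<Rightarrow> 'b set \<Rightarrow> 'b set \<Rightarrow> 'b set \<Rightarrow> bool" where
  "graded_pair smul A0 A1 L \<longleftrightarrow> graded_algebra smul A0 A1 \<and> d_submodule smul L \<and>
     (\<forall>x\<in>L. \<forall>y\<in>L. x * y - y * x \<in> L) \<and>
     (\<forall>x\<in>L. \<exists>x0\<in>L \<inter> A0. \<exists>x1\<in>L \<inter> A1. x = x0 + x1)"

text \<open>Commuting variables alpha_i, beta_i, gamma_i of the polynomial ring \<A> = D[alpha,beta,gamma].\<close>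
datatype cvar = Alpha nat | Beta nat | Gamma nat

type_synonym 'a cpoly = "(cvar \<Rightarrow>\<^sub>0 nat) \<Rightarrow>\<^sub>0 'a"

definition pvar :: "cvar \<Rightarrow> 'a::comm_ring_1 cpoly" where
  "pvar v = Poly_Mapping.single (Poly_Mapping.single v 1) 1"

definition pconst :: "'a::comm_ring_1 \<Rightarrow> 'a cpoly" where
  "pconst c = Poly_Mapping.single 0 c"

definition genY :: "nat \<Rightarrow> 'a::comm_ring_1 cpoly mat2" where
  "genY i = Mat2 (pvar (Alpha i)) 0 0 (- pvar (Alpha i))"

definition genZ :: "nat \<Rightarrow> 'a::comm_ring_1 cpoly mat2" where
  "genZ i = Mat2 0 (pvar (Beta i)) (pvar (Gamma i)) 0"

definition Rsmul :: "'a::comm_ring_1 \<Rightarrow> 'a cpoly mat2 \<Rightarrow> 'a cpoly mat2" where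
  "Rsmul c A = mat2_scale (pconst c) A"

inductive_set genR :: "'a::comm_ring_1 cpoly mat2 set" where
  one: "1 \<in> genR"
| Y: "genY i \<in> genR"
| Z: "genZ i \<in> genR"
| add: "x \<in> genR \<Longrightarrow> y \<in> genR \<Longrightarrow> x + y \<in> genR"
| mult: "x \<in> genR \<Longrightarrow> y \<in> genR \<Longrightarrow> x * y \<in> genR"
| smul: "x \<in> genR \<Longrightarrow> Rsmul c x \<in> genR"

inductive_set genS :: "'a::comm_ring_1 cpoly mat2 set" where
  Y: "genY i \<in> genS"
| Z: "genZ i \<in> genS"
| add: "x \<in> genS \<Longrightarrow> y \<in> genS \<Longrightarrow> x + y \<in> genS"
| bracket: "x \<in> genS \<Longrightarrow> y \<in> genS \<Longrightarrow> x * y - y * x \<in> genS"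
| smul: "x \<in> genS \<Longrightarrow> Rsmul c x \<in> genS"

definition genR0 :: "'a::comm_ring_1 cpoly mat2 set" where "genR0 = genR \<inter> diag2"
definition genR1 :: "'a::comm_ring_1 cpoly mat2 set" where "genR1 = genR \<inter> offdiag2"

definition graded_hom_R :: "('a::comm_ring_1 \<Rightarrow> 'b::ring_1 \<Rightarrow> 'b) \<Rightarrow> 'b set \<Rightarrow> 'b set
    \<Rightarrow> ('a cpoly mat2 \<Rightarrow> 'b) \<Rightarrow> bool" where
  "graded_hom_R smul A0 A1 \<psi> \<longleftrightarrow>
     (\<forall>x\<in>genR. \<forall>y\<in>genR. \<psi> (x + y) = \<psi> x + \<psi> y) \<and>
     (\<forall>x\<in>genR. \<forall>y\<in>genR. \<psi> (x * y) = \<psi> x * \<psi> y) \<and>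
     (\<forall>c. \<forall>x\<in>genR. \<psi> (Rsmul c x) = smul c (\<psi> x)) \<and>
     \<psi> 1 = 1 \<and> \<psi> ` genR0 \<subseteq> A0 \<and> \<psi> ` genR1 \<subseteq> A1"

end

theory Submission
  imports Defs "HOL-Computational_Algebra.Polynomial"
begin

text \<open>Every assignment of values in \<open>D\<close> to the commuting variables \<open>\<alpha>\<^sub>i, \<beta>\<^sub>i, \<gamma>\<^sub>i\<close> gives a
  specialisation \<open>M\<^sub>2(\<A>) \<rightarrow> M\<^sub>2(D)\<close> sending \<open>Y\<^sub>i, Z\<^sub>i\<close> to traceless graded matrices.
  Hence the value on \<open>(R, S)\<close> of a weak identity of \<open>(M\<^sub>2(D), sl\<^sub>2(D))\<close> is a matrix of
  polynomials all of whose specialisations vanish, so it is zero because \<open>D\<close> is infinite.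
  Conversely every graded traceless substitution into \<open>M\<^sub>2(D)\<close> arises by specialising
  \<open>Y\<^sub>i, Z\<^sub>i\<close>, so a noncommutative polynomial vanishing at \<open>(Y\<^sub>i, Z\<^sub>i)\<close> is a weak identity
  of \<open>(M\<^sub>2(D), sl\<^sub>2(D))\<close>, and hence vanishes at \<open>(a\<^sub>i, b\<^sub>i)\<close>. Evaluation at \<open>(a\<^sub>i, b\<^sub>i)\<close>
  therefore factors through \<open>R\<close>. The induced map is graded because homogeneous elements of
  \<open>R\<close> are values of homogeneous polynomials, and it maps \<open>S\<close> into \<open>L\<close> because \<open>L\<close> is closed
  under the operations generating \<open>S\<close>.\<close>

lemma d_algebraD:
  assumes "d_algebra s"
  shows "s a (s b x) = s (a * b) x" and "s 1 x = x"
    and "s (a + b) x = s a x + s b x" and "s a (x + y) = s a x + s a y"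
    and "s a (x * y) = s a x * y" and "s a (x * y) = x * s a y"
  using assms unfolding d_algebra_def by blast+

lemma d_algebra_zero_left: "d_algebra s \<Longrightarrow> s 0 x = 0"
  using d_algebraD(3)[of s 0 0 x] by simp

lemma d_algebra_neg_one:
  assumes "d_algebra s" shows "s (- 1) x = - x"
proof -
  have "s (1 + - 1) x = s 1 x + s (- 1) x" by (rule d_algebraD(3)[OF assms])
  then show ?thesis
    by (simp add: d_algebra_zero_left[OF assms] d_algebraD(2)[OF assms] eq_neg_iff_add_eq_0 add.commute)
qed

lemma d_algebra_mult: "d_algebra s \<Longrightarrow> s (a * b) (x * y) = s a x * s b y"
  by (metis d_algebraD(1,5,6))

lemma d_algebra_times: "d_algebra ((*) :: 'a::comm_ring_1 \<Rightarrow> 'a \<Rightarrow> 'a)"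
  by (simp add: d_algebra_def algebra_simps)

lemma d_submodule_diff:
  "d_algebra s \<Longrightarrow> d_submodule s M \<Longrightarrow> x \<in> M \<Longrightarrow> y \<in> M \<Longrightarrow> x - y \<in> M"
  unfolding d_submodule_def by (metis d_algebra_neg_one diff_conv_add_uminus)

lemma d_submodule_sum: "d_submodule s M \<Longrightarrow> (\<And>i. i \<in> I \<Longrightarrow> g i \<in> M) \<Longrightarrow> sum g I \<in> M"
  by (induction I rule: infinite_finite_induct) (auto simp: d_submodule_def)

definition linear_ext :: "('c::zero \<Rightarrow> 'b \<Rightarrow> 'b) \<Rightarrow> ('k \<Rightarrow> 'b) \<Rightarrow> ('k \<Rightarrow>\<^sub>0 'c) \<Rightarrow> 'b::comm_monoid_add" where
  "linear_ext s e p = (\<Sum>k\<in>Poly_Mapping.keys p. s (Poly_Mapping.lookup p k) (e k))"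

lemma nc_eval_eq_linear_ext: "nc_eval s \<sigma> = linear_ext s (\<lambda>w. prod_list (map \<sigma> w))"
  by (simp add: fun_eq_iff nc_eval_def linear_ext_def)

lemma linear_ext_zero [simp]: "linear_ext s e 0 = 0"
  by (simp add: linear_ext_def)

lemma linear_ext_single: "d_algebra s \<Longrightarrow> linear_ext s e (Poly_Mapping.single k c) = s c (e k)"
  by (simp add: linear_ext_def d_algebra_zero_left)

lemma linear_ext_add:
  "d_algebra s \<Longrightarrow> linear_ext s e (p + q) = linear_ext s e p + linear_ext s e q"
  unfolding linear_ext_def
  by (rule setsum_keys_plus_distrib) (simp_all add: d_algebra_zero_left d_algebraD(3))

lemma linear_ext_sum:
  "d_algebra s \<Longrightarrow> linear_ext s e (sum f I) = (\<Sum>i\<in>I. linear_ext s e (f i))"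
  by (induction I rule: infinite_finite_induct) (auto simp: linear_ext_add)

lemma linear_ext_diff:
  "d_algebra s \<Longrightarrow> linear_ext s e (p - q) = linear_ext s e p - linear_ext s e q"
  using linear_ext_add[of s e "p - q" q] by (simp add: eq_diff_eq)

lemma poly_mapping_sum_single:
  "p = (\<Sum>k\<in>Poly_Mapping.keys p. Poly_Mapping.single k (Poly_Mapping.lookup p k))"
  by (rule poly_mapping_eqI)
     (auto simp: lookup_sum lookup_single when_def in_keys_iff sum.delta' split: if_splits)

definition convolution ::
  "('k \<Rightarrow> 'k \<Rightarrow> 'k) \<Rightarrow> ('k \<Rightarrow>\<^sub>0 'c::semiring_0) \<Rightarrow> ('k \<Rightarrow>\<^sub>0 'c) \<Rightarrow> 'k \<Rightarrow>\<^sub>0 'c" where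
  "convolution op p q = (\<Sum>u\<in>Poly_Mapping.keys p. \<Sum>v\<in>Poly_Mapping.keys q.
     Poly_Mapping.single (op u v) (Poly_Mapping.lookup p u * Poly_Mapping.lookup q v))"

lemma times_poly_mapping_eq_convolution:
  "p * q = convolution (+) p (q :: 'k::monoid_add \<Rightarrow>\<^sub>0 'c::comm_semiring_0)"
  unfolding convolution_def
  by (subst poly_mapping_sum_single[of p], subst poly_mapping_sum_single[of q])
     (simp add: sum_distrib_left sum_distrib_right mult_single sum.swap[of _ "Poly_Mapping.keys q"])

lemma linear_ext_convolution:
  assumes "d_algebra s" and "\<And>u v. e (op u v) = e u * e v"
  shows "linear_ext s e (convolution op p q) = linear_ext s e p * linear_ext s e q"
proof -
  have "linear_ext s e (convolution op p q) = (\<Sum>u\<in>Poly_Mapping.keys p. \<Sum>v\<in>Poly_Mapping.keys q.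
      s (Poly_Mapping.lookup p u) (e u) * s (Poly_Mapping.lookup q v) (e v))"
    using assms by (simp add: convolution_def linear_ext_sum linear_ext_single d_algebra_mult)
  then show ?thesis
    by (simp add: linear_ext_def sum_product)
qed

section \<open>Evaluating commutative polynomials\<close>

definition monomial_value :: "('v \<Rightarrow> 'a::comm_ring_1) \<Rightarrow> ('v \<Rightarrow>\<^sub>0 nat) \<Rightarrow> 'a" where
  "monomial_value x m = (\<Prod>u\<in>Poly_Mapping.keys m. x u ^ Poly_Mapping.lookup m u)"

definition cpoly_eval :: "('v \<Rightarrow> 'a::comm_ring_1) \<Rightarrow> (('v \<Rightarrow>\<^sub>0 nat) \<Rightarrow>\<^sub>0 'a) \<Rightarrow> 'a" where
  "cpoly_eval x = linear_ext (*) (monomial_value x)"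

lemma monomial_value_superset:
  assumes "finite W" "Poly_Mapping.keys m \<subseteq> W"
  shows "monomial_value x m = (\<Prod>u\<in>W. x u ^ Poly_Mapping.lookup m u)"
  unfolding monomial_value_def
  by (rule prod.mono_neutral_left) (use assms in \<open>auto simp: in_keys_iff\<close>)

lemma monomial_value_add: "monomial_value x (m + n) = monomial_value x m * monomial_value x n"
proof -
  let ?W = "Poly_Mapping.keys m \<union> Poly_Mapping.keys n"
  have "monomial_value x (m + n) = (\<Prod>u\<in>?W. x u ^ Poly_Mapping.lookup (m + n) u)"
    by (rule monomial_value_superset) (auto dest: subsetD[OF keys_add])
  also have "\<dots> = (\<Prod>u\<in>?W. x u ^ Poly_Mapping.lookup m u) * (\<Prod>u\<in>?W. x u ^ Poly_Mapping.lookup n u)"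
    by (simp add: lookup_add power_add prod.distrib)
  finally show ?thesis
    by (simp add: monomial_value_superset[of ?W])
qed

lemma cpoly_eval_zero [simp]: "cpoly_eval x 0 = 0"
  by (simp add: cpoly_eval_def)

lemma cpoly_eval_add: "cpoly_eval x (p + q) = cpoly_eval x p + cpoly_eval x q"
  by (simp add: cpoly_eval_def linear_ext_add d_algebra_times)

lemma cpoly_eval_diff: "cpoly_eval x (p - q) = cpoly_eval x p - cpoly_eval x q"
  by (simp add: cpoly_eval_def linear_ext_diff d_algebra_times)

lemma cpoly_eval_uminus: "cpoly_eval x (- p) = - cpoly_eval x p"
  using cpoly_eval_diff[of x 0 p] by simp

lemma cpoly_eval_mult: "cpoly_eval x (p * q) = cpoly_eval x p * cpoly_eval x q"
  by (simp add: cpoly_eval_def times_poly_mapping_eq_convolution linear_ext_convolution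
      d_algebra_times monomial_value_add)

lemma cpoly_eval_single [simp]: "cpoly_eval x (Poly_Mapping.single m c) = c * monomial_value x m"
  by (simp add: cpoly_eval_def linear_ext_single d_algebra_times)

lemma cpoly_eval_one [simp]: "cpoly_eval x 1 = 1"
  by (metis cpoly_eval_single single_one monomial_value_def keys_zero prod.empty mult_1)

lemma cpoly_eval_pvar [simp]: "cpoly_eval x (pvar v) = x v"
  by (simp add: pvar_def monomial_value_def)

lemma cpoly_eval_pconst [simp]: "cpoly_eval x (pconst c) = c"
  by (simp add: pconst_def monomial_value_def)

lemma power_sum_zero_imp_coeff_zero:
  fixes C :: "nat \<Rightarrow> 'a::idom"
  assumes "infinite (UNIV :: 'a set)" and "finite K" and "k \<in> K"
    and "\<And>t. (\<Sum>j\<in>K. C j * t ^ j) = 0"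
  shows "C k = 0"
proof -
  define P where "P = (\<Sum>j\<in>K. monom (C j) j)"
  have "poly P t = 0" for t
    using assms(4) by (simp add: P_def poly_sum poly_monom)
  then have "P = 0"
    using poly_roots_finite[of P] assms(1) by auto
  moreover have "coeff P k = C k"
    using assms(2,3) by (simp add: P_def coeff_sum coeff_monom)
  ultimately show ?thesis by simp
qed

text \<open>Freezing all variables but one leaves a univariate polynomial with infinitely many
  roots; its coefficients are the sums over the fibres of the exponent of that variable.
  Induction over the set of variables then isolates a single monomial.\<close>

lemma vanishing_exponent_sum_fibre:
  fixes c :: "'i \<Rightarrow> 'a::idom" and ex :: "'i \<Rightarrow> 'v \<Rightarrow> nat"
  assumes inf: "infinite (UNIV :: 'a set)" and "finite V"
  shows "finite M \<Longrightarrow> \<forall>x. (\<Sum>i\<in>M. c i * (\<Prod>u\<in>V. x u ^ ex i u)) = 0 \<Longrightarrow> i0 \<in> M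
    \<Longrightarrow> (\<Sum>i\<in>{i\<in>M. \<forall>u\<in>V. ex i u = ex i0 u}. c i) = 0"
  using \<open>finite V\<close>
proof (induction V arbitrary: M i0 rule: finite_induct)
  case (insert v V)
  define K where "K = (\<lambda>i. ex i v) ` M"
  define C where "C k x = (\<Sum>i\<in>{i\<in>M. ex i v = k}. c i * (\<Prod>u\<in>V. x u ^ ex i u))" for k x
  have "C (ex i0 v) x = 0" for x
  proof (rule power_sum_zero_imp_coeff_zero[OF inf, where C = "\<lambda>k. C k x"])
    show "finite K" "ex i0 v \<in> K"
      using insert.prems(1,3) by (simp_all add: K_def)
    fix t
    have frozen: "(\<Prod>u\<in>insert v V. (x(v := t)) u ^ ex i u) = t ^ ex i v * (\<Prod>u\<in>V. x u ^ ex i u)"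
      for i
    proof -
      have "(\<Prod>u\<in>V. (x(v := t)) u ^ ex i u) = (\<Prod>u\<in>V. x u ^ ex i u)"
        using insert.hyps(2) by (intro prod.cong) auto
      then show ?thesis using insert.hyps by simp
    qed
    have "(\<Sum>k\<in>K. C k x * t ^ k)
        = (\<Sum>k\<in>K. \<Sum>i\<in>{i\<in>M. ex i v = k}. c i * (\<Prod>u\<in>V. x u ^ ex i u) * t ^ ex i v)"
      by (simp add: C_def sum_distrib_right)
    also have "\<dots> = (\<Sum>i\<in>M. c i * (\<Prod>u\<in>V. x u ^ ex i u) * t ^ ex i v)"
      unfolding K_def using insert.prems(1) by (rule sum.image_gen[symmetric])
    also have "\<dots> = (\<Sum>i\<in>M. c i * (\<Prod>u\<in>insert v V. (x(v := t)) u ^ ex i u))"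
      unfolding frozen by (simp add: algebra_simps)
    also have "\<dots> = 0"
      using insert.prems(2) by blast
    finally show "(\<Sum>k\<in>K. C k x * t ^ k) = 0" .
  qed
  then have "(\<Sum>i\<in>{i\<in>{i\<in>M. ex i v = ex i0 v}. \<forall>u\<in>V. ex i u = ex i0 u}. c i) = 0"
    using insert.prems(1,3) by (intro insert.IH) (simp_all add: C_def)
  moreover have "{i\<in>{i\<in>M. ex i v = ex i0 v}. \<forall>u\<in>V. ex i u = ex i0 u}
      = {i\<in>M. \<forall>u\<in>insert v V. ex i u = ex i0 u}"
    by auto
  ultimately show ?case by simp
qed simp

lemma cpoly_eval_eq_zero_imp_zero:
  fixes p :: "('v \<Rightarrow>\<^sub>0 nat) \<Rightarrow>\<^sub>0 'a::idom"
  assumes inf: "infinite (UNIV :: 'a set)" and vanish: "\<And>x. cpoly_eval x p = 0"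
  shows "p = 0"
proof (rule ccontr)
  assume "p \<noteq> 0"
  then obtain m0 where m0: "m0 \<in> Poly_Mapping.keys p"
    by (metis all_not_in_conv keys_eq_empty)
  define V where "V = \<Union> (Poly_Mapping.keys ` Poly_Mapping.keys p)"
  have "finite V" by (simp add: V_def)
  have expand: "cpoly_eval x p = (\<Sum>m\<in>Poly_Mapping.keys p.
      Poly_Mapping.lookup p m * (\<Prod>u\<in>V. x u ^ Poly_Mapping.lookup m u))" for x
    unfolding cpoly_eval_def linear_ext_def
  proof (intro sum.cong refl)
    fix m assume "m \<in> Poly_Mapping.keys p"
    then have "Poly_Mapping.keys m \<subseteq> V" by (auto simp: V_def)
    then show "Poly_Mapping.lookup p m * monomial_value x m
        = Poly_Mapping.lookup p m * (\<Prod>u\<in>V. x u ^ Poly_Mapping.lookup m u)"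
      by (simp add: monomial_value_superset[OF \<open>finite V\<close>])
  qed
  have "(\<Sum>m\<in>{m\<in>Poly_Mapping.keys p. \<forall>u\<in>V. Poly_Mapping.lookup m u = Poly_Mapping.lookup m0 u}.
      Poly_Mapping.lookup p m) = 0"
    using vanishing_exponent_sum_fibre[OF inf \<open>finite V\<close>, of "Poly_Mapping.keys p"
        "Poly_Mapping.lookup p" Poly_Mapping.lookup m0] m0 vanish by (simp add: expand)
  moreover have "{m\<in>Poly_Mapping.keys p. \<forall>u\<in>V. Poly_Mapping.lookup m u = Poly_Mapping.lookup m0 u} = {m0}"
  proof -
    have "m = m0" if "m \<in> Poly_Mapping.keys p" "\<forall>u\<in>V. Poly_Mapping.lookup m u = Poly_Mapping.lookup m0 u" for m
    proof (rule poly_mapping_eqI)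
      fix u
      show "Poly_Mapping.lookup m u = Poly_Mapping.lookup m0 u"
        using that m0 by (cases "u \<in> V") (auto simp: V_def in_keys_iff)
    qed
    then show ?thesis using m0 by auto
  qed
  ultimately show False
    using m0 by (simp add: in_keys_iff)
qed

lemma nc_eval_add: "d_algebra s \<Longrightarrow> nc_eval s \<sigma> (f + g) = nc_eval s \<sigma> f + nc_eval s \<sigma> g"
  by (simp add: nc_eval_eq_linear_ext linear_ext_add)

lemma nc_eval_diff: "d_algebra s \<Longrightarrow> nc_eval s \<sigma> (f - g) = nc_eval s \<sigma> f - nc_eval s \<sigma> g"
  by (simp add: nc_eval_eq_linear_ext linear_ext_diff)

lemma nc_eval_single:
  "d_algebra s \<Longrightarrow> nc_eval s \<sigma> (Poly_Mapping.single w c) = s c (prod_list (map \<sigma> w))"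
  by (simp add: nc_eval_eq_linear_ext linear_ext_single)

lemma nc_eval_one: "d_algebra s \<Longrightarrow> nc_eval s \<sigma> (Poly_Mapping.single [] 1) = 1"
  by (simp add: nc_eval_single d_algebraD(2))

lemma nc_eval_var: "d_algebra s \<Longrightarrow> nc_eval s \<sigma> (Poly_Mapping.single [v] 1) = \<sigma> v"
  by (simp add: nc_eval_single d_algebraD(2))

definition ncpoly_mult :: "'a::comm_ring_1 ncpoly \<Rightarrow> 'a ncpoly \<Rightarrow> 'a ncpoly" where
  "ncpoly_mult = convolution (@)"

lemma nc_eval_mult:
  "d_algebra s \<Longrightarrow> nc_eval s \<sigma> (ncpoly_mult f g) = nc_eval s \<sigma> f * nc_eval s \<sigma> g"
  by (simp add: nc_eval_eq_linear_ext ncpoly_mult_def linear_ext_convolution)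

lemma nc_eval_const_mult:
  assumes "d_algebra s"
  shows "nc_eval s \<sigma> (ncpoly_mult (Poly_Mapping.single [] c) f) = s c (nc_eval s \<sigma> f)"
  using assms by (simp add: nc_eval_mult nc_eval_single d_algebraD(5)[symmetric])

lemma nc_eval_hom:
  assumes add: "\<And>x y. \<Phi> (x + y) = \<Phi> x + \<Phi> y" and mult: "\<And>x y. \<Phi> (x * y) = \<Phi> x * \<Phi> y"
    and one: "\<Phi> 1 = 1" and scale: "\<And>c x. \<Phi> (s1 c x) = s2 c (\<Phi> x)"
  shows "\<Phi> (nc_eval s1 \<sigma> f) = nc_eval s2 (\<Phi> \<circ> \<sigma>) f"
proof -
  have zero: "\<Phi> 0 = 0"
    using add[of 0 0] by simp
  have "\<Phi> (sum g I) = (\<Sum>i\<in>I. \<Phi> (g i))" for g and I :: "xvar list set"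
    by (induction I rule: infinite_finite_induct) (auto simp: add zero)
  moreover have "\<Phi> (prod_list (map \<sigma> w)) = prod_list (map (\<Phi> \<circ> \<sigma>) w)" for w
    by (induction w) (auto simp: one mult)
  ultimately show ?thesis
    by (simp add: nc_eval_def scale)
qed

section \<open>Specialisations of \<open>M\<^sub>2(\<A>)\<close>\<close>

lemma mat2_entries [simp]:
  "m11 (A + B) = m11 A + m11 B" "m12 (A + B) = m12 A + m12 B"
  "m21 (A + B) = m21 A + m21 B" "m22 (A + B) = m22 A + m22 B"
  "m11 (A - B) = m11 A - m11 B" "m12 (A - B) = m12 A - m12 B"
  "m21 (A - B) = m21 A - m21 B" "m22 (A - B) = m22 A - m22 B"
  "m11 (A * B) = m11 A * m11 B + m12 A * m21 B" "m12 (A * B) = m11 A * m12 B + m12 A * m22 B"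
  "m21 (A * B) = m21 A * m11 B + m22 A * m21 B" "m22 (A * B) = m21 A * m12 B + m22 A * m22 B"
  "m11 0 = 0" "m12 0 = 0" "m21 0 = 0" "m22 0 = 0"
  "m11 1 = 1" "m12 1 = 0" "m21 1 = 0" "m22 1 = 1"
  by (simp_all add: plus_mat2_def minus_mat2_def times_mat2_def zero_mat2_def one_mat2_def)

lemma mat2_eq_iff: "A = B \<longleftrightarrow> m11 A = m11 B \<and> m12 A = m12 B \<and> m21 A = m21 B \<and> m22 A = m22 B"
  by (cases A, cases B) simp

lemma Rsmul_entries [simp]:
  "m11 (Rsmul c A) = pconst c * m11 A" "m12 (Rsmul c A) = pconst c * m12 A"
  "m21 (Rsmul c A) = pconst c * m21 A" "m22 (Rsmul c A) = pconst c * m22 A"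
  by (simp_all add: Rsmul_def mat2_scale_def)

definition mat2_map :: "('r \<Rightarrow> 's) \<Rightarrow> 'r mat2 \<Rightarrow> 's mat2" where
  "mat2_map h A = Mat2 (h (m11 A)) (h (m12 A)) (h (m21 A)) (h (m22 A))"

lemma nc_eval_specialise:
  "mat2_map (cpoly_eval x) (nc_eval Rsmul \<sigma> f) = nc_eval mat2_scale (mat2_map (cpoly_eval x) \<circ> \<sigma>) f"
  by (rule nc_eval_hom)
     (simp_all add: mat2_map_def plus_mat2_def times_mat2_def one_mat2_def mat2_scale_def
       Rsmul_def cpoly_eval_add cpoly_eval_mult)

lemma mat2_eq_zero_if_specialisations_zero:
  fixes N :: "'a::idom cpoly mat2"
  assumes "infinite (UNIV :: 'a set)" and "\<And>x. mat2_map (cpoly_eval x) N = 0"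
  shows "N = 0"
proof -
  have "m11 N = 0" "m12 N = 0" "m21 N = 0" "m22 N = 0"
    by (rule cpoly_eval_eq_zero_imp_zero[OF assms(1)],
        use assms(2) in \<open>auto simp: mat2_map_def zero_mat2_def\<close>)+
  then show ?thesis
    by (simp add: zero_mat2_def mat2.expand)
qed

lemma specialise_sl2_diag2: "A \<in> sl2 \<inter> diag2 \<Longrightarrow> mat2_map (cpoly_eval x) A \<in> sl2 \<inter> diag2"
  by (simp add: sl2_def diag2_def mat2_map_def cpoly_eval_add[symmetric])

lemma specialise_sl2_offdiag2: "A \<in> sl2 \<inter> offdiag2 \<Longrightarrow> mat2_map (cpoly_eval x) A \<in> sl2 \<inter> offdiag2"
  by (simp add: sl2_def offdiag2_def mat2_map_def)

lemma d_algebra_Rsmul: "d_algebra (Rsmul :: 'a::comm_ring_1 \<Rightarrow> 'a cpoly mat2 \<Rightarrow> _)"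
  by (simp add: d_algebra_def Rsmul_def mat2_scale_def pconst_def mult_single single_add
      times_mat2_def plus_mat2_def algebra_simps)

lemma genR_diff: "x \<in> genR \<Longrightarrow> y \<in> genR \<Longrightarrow> x - y \<in> genR"
  using d_algebra_neg_one[OF d_algebra_Rsmul, of y]
  by (metis diff_conv_add_uminus genR.add genR.smul)

lemma genS_subset_genR: "x \<in> genS \<Longrightarrow> x \<in> genR"
  by (induction rule: genS.induct) (auto intro: genR.intros genR_diff)

lemma genS_subset_sl2: "x \<in> genS \<Longrightarrow> x \<in> sl2"
proof (induction rule: genS.induct)
  case (smul x c)
  then show ?case
    by (simp add: sl2_def distrib_left[symmetric])
qed (auto simp: sl2_def genY_def genZ_def algebra_simps)

theorem weak_ids_M2_subset_weak_ids_RS: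
  assumes "infinite (UNIV :: 'a::idom set)"
  shows "weak_ids (mat2_scale :: 'a \<Rightarrow> 'a mat2 \<Rightarrow> 'a mat2) (sl2 \<inter> diag2) (sl2 \<inter> offdiag2)
           \<subseteq> weak_ids (Rsmul :: 'a \<Rightarrow> 'a cpoly mat2 \<Rightarrow> _) (genS \<inter> genR0) (genS \<inter> genR1)"
  unfolding weak_ids_def
proof (intro subsetI CollectI allI impI)
  fix f :: "'a ncpoly" and \<sigma> :: "xvar \<Rightarrow> 'a cpoly mat2"
  assume f: "f \<in> {f. \<forall>\<tau>. (\<forall>i. \<tau> (Yv i) \<in> sl2 \<inter> diag2) \<and> (\<forall>i. \<tau> (Zv i) \<in> sl2 \<inter> offdiag2)
      \<longrightarrow> nc_eval mat2_scale \<tau> f = 0}"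
    and \<sigma>: "(\<forall>i. \<sigma> (Yv i) \<in> genS \<inter> genR0) \<and> (\<forall>i. \<sigma> (Zv i) \<in> genS \<inter> genR1)"
  have Y: "\<sigma> (Yv i) \<in> sl2 \<inter> diag2" and Z: "\<sigma> (Zv i) \<in> sl2 \<inter> offdiag2" for i
    using \<sigma> genS_subset_sl2 by (auto simp: genR0_def genR1_def)
  have "(\<forall>i. (mat2_map (cpoly_eval x) \<circ> \<sigma>) (Yv i) \<in> sl2 \<inter> diag2)
      \<and> (\<forall>i. (mat2_map (cpoly_eval x) \<circ> \<sigma>) (Zv i) \<in> sl2 \<inter> offdiag2)" for x
    using specialise_sl2_diag2[OF Y] specialise_sl2_offdiag2[OF Z] by simp
  then have "nc_eval mat2_scale (mat2_map (cpoly_eval x) \<circ> \<sigma>) f = 0" for x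
    using f by blast
  then show "nc_eval Rsmul \<sigma> f = 0"
    by (intro mat2_eq_zero_if_specialisations_zero[OF assms]) (simp add: nc_eval_specialise)
qed

lemma graded_algebra_one_even:
  assumes ga: "graded_algebra s A0 A1"
  shows "1 \<in> A0"
proof -
  have da: "d_algebra s" and A0: "d_submodule s A0" and A01: "A0 \<inter> A1 = {0}"
    and m00: "\<And>x y. x \<in> A0 \<Longrightarrow> y \<in> A0 \<Longrightarrow> x * y \<in> A0"
    and m01: "\<And>x y. x \<in> A0 \<Longrightarrow> y \<in> A1 \<Longrightarrow> x * y \<in> A1"
    and m11: "\<And>x y. x \<in> A1 \<Longrightarrow> y \<in> A1 \<Longrightarrow> x * y \<in> A0"
    using ga unfolding graded_algebra_def by blast+
  obtain e0 e1 where e0: "e0 \<in> A0" and e1: "e1 \<in> A1" and one: "1 = e0 + e1"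
    using ga unfolding graded_algebra_def by blast
  have "e0 * e1 = e0 - e0 * e0"
    using arg_cong[where f = "\<lambda>u. e0 * u", OF one] by (simp add: algebra_simps)
  then have "e0 * e1 \<in> A0"
    using d_submodule_diff[OF da A0] e0 m00 by simp
  then have "e0 * e1 = 0"
    using A01 m01[OF e0 e1] by blast
  moreover have "e1 = e0 * e1 + e1 * e1"
    using arg_cong[where f = "\<lambda>u. u * e1", OF one] by (simp add: algebra_simps)
  ultimately have "e1 \<in> A0 \<inter> A1"
    using e1 m11 by (metis IntI add_0)
  then show ?thesis
    using A01 one e0 by auto
qed

lemma graded_algebra_homogeneous_parts:
  assumes ga: "graded_algebra s A0 A1" and "x0 \<in> A0" and "x1 \<in> A1"
  shows "x0 + x1 \<in> A0 \<Longrightarrow> x1 = 0" and "x0 + x1 \<in> A1 \<Longrightarrow> x0 = 0"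
proof -
  have da: "d_algebra s" and "d_submodule s A0" "d_submodule s A1" and A01: "A0 \<inter> A1 = {0}"
    using ga unfolding graded_algebra_def by blast+
  show "x0 + x1 \<in> A0 \<Longrightarrow> x1 = 0"
    using d_submodule_diff[OF da \<open>d_submodule s A0\<close>, of "x0 + x1" x0] assms(2,3) A01 by auto
  show "x0 + x1 \<in> A1 \<Longrightarrow> x0 = 0"
    using d_submodule_diff[OF da \<open>d_submodule s A1\<close>, of "x0 + x1" x1] assms(2,3) A01 by auto
qed

fun is_odd_var :: "xvar \<Rightarrow> bool" where
  "is_odd_var (Yv i) = False"
| "is_odd_var (Zv i) = True"

definition even_word :: "xvar list \<Rightarrow> bool" where
  "even_word w \<longleftrightarrow> even (length (filter is_odd_var w))"

lemma prod_list_graded: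
  assumes ga: "graded_algebra s A0 A1"
    and "\<And>i. \<sigma> (Yv i) \<in> A0" and "\<And>i. \<sigma> (Zv i) \<in> A1"
  shows "prod_list (map \<sigma> w) \<in> (if even_word w then A0 else A1)"
proof (induction w)
  case Nil
  then show ?case
    using graded_algebra_one_even[OF ga] by (simp add: even_word_def)
next
  case (Cons v w)
  have "\<And>x y. x \<in> A0 \<Longrightarrow> y \<in> A0 \<Longrightarrow> x * y \<in> A0" "\<And>x y. x \<in> A0 \<Longrightarrow> y \<in> A1 \<Longrightarrow> x * y \<in> A1"
    "\<And>x y. x \<in> A1 \<Longrightarrow> y \<in> A0 \<Longrightarrow> x * y \<in> A1" "\<And>x y. x \<in> A1 \<Longrightarrow> y \<in> A1 \<Longrightarrow> x * y \<in> A0"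
    using ga unfolding graded_algebra_def by blast+
  with Cons assms(2,3) show ?case
    by (cases v) (auto simp: even_word_def split: if_splits)
qed

lemma nc_eval_homogeneous:
  assumes ga: "graded_algebra s A0 A1"
    and \<sigma>: "\<And>i. \<sigma> (Yv i) \<in> A0" "\<And>i. \<sigma> (Zv i) \<in> A1"
  shows "(\<And>w. w \<in> Poly_Mapping.keys f \<Longrightarrow> even_word w) \<Longrightarrow> nc_eval s \<sigma> f \<in> A0"
    and "(\<And>w. w \<in> Poly_Mapping.keys f \<Longrightarrow> \<not> even_word w) \<Longrightarrow> nc_eval s \<sigma> f \<in> A1"
proof -
  have A0: "d_submodule s A0" and A1: "d_submodule s A1"
    using ga by (simp_all add: graded_algebra_def)
  have "even_word w \<Longrightarrow> prod_list (map \<sigma> w) \<in> A0" "\<not> even_word w \<Longrightarrow> prod_list (map \<sigma> w) \<in> A1"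
    for w using prod_list_graded[OF ga \<sigma>, of w] by simp_all
  then show "(\<And>w. w \<in> Poly_Mapping.keys f \<Longrightarrow> even_word w) \<Longrightarrow> nc_eval s \<sigma> f \<in> A0"
    and "(\<And>w. w \<in> Poly_Mapping.keys f \<Longrightarrow> \<not> even_word w) \<Longrightarrow> nc_eval s \<sigma> f \<in> A1"
    unfolding nc_eval_def using A0 A1
    by (auto simp: d_submodule_def intro!: d_submodule_sum[OF A0] d_submodule_sum[OF A1])
qed

definition restrict_words :: "(xvar list \<Rightarrow> bool) \<Rightarrow> 'a::zero ncpoly \<Rightarrow> 'a ncpoly" where
  "restrict_words P f = Poly_Mapping.mapp (\<lambda>w c. if P w then c else 0) f"

lemma restrict_words_split: "f = restrict_words P f + restrict_words (\<lambda>w. \<not> P w) f"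
  by (rule poly_mapping_eqI) (simp add: restrict_words_def lookup_add lookup_mapp when_def in_keys_iff)

lemma keys_restrict_words: "w \<in> Poly_Mapping.keys (restrict_words P f) \<Longrightarrow> P w"
  by (auto simp: restrict_words_def in_keys_iff lookup_mapp when_def split: if_splits)

lemma nc_eval_eq_homogeneous_part:
  assumes ga: "graded_algebra s A0 A1"
    and \<sigma>: "\<And>i. \<sigma> (Yv i) \<in> A0" "\<And>i. \<sigma> (Zv i) \<in> A1"
  shows "nc_eval s \<sigma> f \<in> A0 \<Longrightarrow> nc_eval s \<sigma> f = nc_eval s \<sigma> (restrict_words even_word f)"
    and "nc_eval s \<sigma> f \<in> A1 \<Longrightarrow> nc_eval s \<sigma> f = nc_eval s \<sigma> (restrict_words (\<lambda>w. \<not> even_word w) f)"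
proof -
  let ?e = "nc_eval s \<sigma> (restrict_words even_word f)"
  let ?o = "nc_eval s \<sigma> (restrict_words (\<lambda>w. \<not> even_word w) f)"
  have da: "d_algebra s" using ga by (simp add: graded_algebra_def)
  have split: "nc_eval s \<sigma> f = ?e + ?o"
    by (subst restrict_words_split[of f even_word]) (rule nc_eval_add[OF da])
  have "?e \<in> A0" "?o \<in> A1"
    by (auto intro: nc_eval_homogeneous[OF ga \<sigma>] dest: keys_restrict_words)
  with split graded_algebra_homogeneous_parts[OF ga] show
    "nc_eval s \<sigma> f \<in> A0 \<Longrightarrow> nc_eval s \<sigma> f = ?e" and "nc_eval s \<sigma> f \<in> A1 \<Longrightarrow> nc_eval s \<sigma> f = ?o"
    by simp_all
qed

abbreviation gen_var :: "xvar \<Rightarrow> 'a::comm_ring_1 cpoly mat2" where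
  "gen_var \<equiv> case_xvar genY genZ"

lemma genR_eq_nc_eval: "x \<in> genR \<Longrightarrow> \<exists>f. x = nc_eval Rsmul gen_var f"
proof (induction rule: genR.induct)
  case one
  show ?case by (metis nc_eval_one[OF d_algebra_Rsmul])
next
  case (Y i)
  show ?case using nc_eval_var[OF d_algebra_Rsmul, of gen_var "Yv i"] by (auto intro: sym)
next
  case (Z i)
  show ?case using nc_eval_var[OF d_algebra_Rsmul, of gen_var "Zv i"] by (auto intro: sym)
qed (metis nc_eval_add nc_eval_mult nc_eval_const_mult d_algebra_Rsmul)+

lemma graded_algebra_Rsmul: "graded_algebra (Rsmul :: 'a::comm_ring_1 \<Rightarrow> 'a cpoly mat2 \<Rightarrow> _) diag2 offdiag2"
proof -
  have "\<exists>x0\<in>diag2. \<exists>x1\<in>offdiag2. x = x0 + x1" for x :: "'a cpoly mat2"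
    by (rule bexI[of _ "Mat2 (m11 x) 0 0 (m22 x)"], rule bexI[of _ "Mat2 0 (m12 x) (m21 x) 0"])
       (auto simp: diag2_def offdiag2_def intro: mat2.expand)
  moreover have "diag2 \<inter> offdiag2 = {0 :: 'a cpoly mat2}"
    by (auto simp: diag2_def offdiag2_def intro: mat2.expand)
  ultimately show ?thesis
    using d_algebra_Rsmul
    by (auto simp: graded_algebra_def d_submodule_def diag2_def offdiag2_def)
qed

lemma gen_var_graded: "gen_var (Yv i) \<in> diag2" "gen_var (Zv i) \<in> offdiag2"
  by (simp_all add: genY_def genZ_def diag2_def offdiag2_def)

lemma genR0_homogeneous_rep:
  assumes "x \<in> genR0"
  shows "\<exists>f. x = nc_eval Rsmul gen_var f \<and> (\<forall>w\<in>Poly_Mapping.keys f. even_word w)"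
proof -
  obtain f where f: "x = nc_eval Rsmul gen_var f"
    using assms genR_eq_nc_eval by (auto simp: genR0_def)
  have "x \<in> diag2"
    using assms by (simp add: genR0_def)
  then have "x = nc_eval Rsmul gen_var (restrict_words even_word f)"
    unfolding f by (rule nc_eval_eq_homogeneous_part(1)[OF graded_algebra_Rsmul gen_var_graded])
  then show ?thesis by (blast dest: keys_restrict_words)
qed

lemma genR1_homogeneous_rep:
  assumes "x \<in> genR1"
  shows "\<exists>f. x = nc_eval Rsmul gen_var f \<and> (\<forall>w\<in>Poly_Mapping.keys f. \<not> even_word w)"
proof -
  obtain f where f: "x = nc_eval Rsmul gen_var f"
    using assms genR_eq_nc_eval by (auto simp: genR1_def)
  have "x \<in> offdiag2"
    using assms by (simp add: genR1_def)
  then have "x = nc_eval Rsmul gen_var (restrict_words (\<lambda>w. \<not> even_word w) f)"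
    unfolding f by (rule nc_eval_eq_homogeneous_part(2)[OF graded_algebra_Rsmul gen_var_graded])
  then show ?thesis by (blast dest: keys_restrict_words)
qed

lemma nc_eval_gen_var_zero_imp_weak_id:
  assumes "nc_eval Rsmul gen_var f = (0 :: 'a::comm_ring_1 cpoly mat2)"
  shows "f \<in> weak_ids (mat2_scale :: 'a \<Rightarrow> 'a mat2 \<Rightarrow> 'a mat2) (sl2 \<inter> diag2) (sl2 \<inter> offdiag2)"
  unfolding weak_ids_def
proof (intro CollectI allI impI)
  fix \<tau> :: "xvar \<Rightarrow> 'a mat2"
  assume \<tau>: "(\<forall>i. \<tau> (Yv i) \<in> sl2 \<inter> diag2) \<and> (\<forall>i. \<tau> (Zv i) \<in> sl2 \<inter> offdiag2)"
  define x where "x = case_cvar (\<lambda>i. m11 (\<tau> (Yv i))) (\<lambda>i. m12 (\<tau> (Zv i))) (\<lambda>i. m21 (\<tau> (Zv i)))"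
  have "mat2_map (cpoly_eval x) \<circ> gen_var = \<tau>"
  proof
    fix v
    show "(mat2_map (cpoly_eval x) \<circ> gen_var) v = \<tau> v"
      using \<tau>
      by (cases v) (auto simp: genY_def genZ_def mat2_map_def x_def cpoly_eval_uminus sl2_def
          diag2_def offdiag2_def mat2_eq_iff neg_eq_iff_add_eq_0)
  qed
  then have "nc_eval mat2_scale \<tau> f = mat2_map (cpoly_eval x) (nc_eval Rsmul gen_var f)"
    by (simp add: nc_eval_specialise)
  then show "nc_eval mat2_scale \<tau> f = 0"
    using assms by (simp add: mat2_map_def zero_mat2_def)
qed

section \<open>The universal property\<close>

locale M2_identity_pair =
  fixes smul :: "'a::comm_ring_1 \<Rightarrow> 'b::ring_1 \<Rightarrow> 'b" and A0 A1 L :: "'b set" and a b :: "nat \<Rightarrow> 'b"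
  assumes graded_pair: "graded_pair smul A0 A1 L"
    and identities: "weak_ids (mat2_scale :: 'a \<Rightarrow> 'a mat2 \<Rightarrow> 'a mat2) (sl2 \<inter> diag2) (sl2 \<inter> offdiag2)
      \<subseteq> weak_ids smul (L \<inter> A0) (L \<inter> A1)"
    and even_gens: "\<And>i. a i \<in> L \<inter> A0" and odd_gens: "\<And>i. b i \<in> L \<inter> A1"
begin

lemma graded_algebra_A: "graded_algebra smul A0 A1"
  using graded_pair by (simp add: graded_pair_def)

lemma d_algebra_smul: "d_algebra smul"
  using graded_algebra_A by (simp add: graded_algebra_def)

lemma nc_eval_well_defined:
  assumes "nc_eval Rsmul gen_var f = (nc_eval Rsmul gen_var g :: 'a cpoly mat2)"
  shows "nc_eval smul (case_xvar a b) f = nc_eval smul (case_xvar a b) g"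
proof -
  have "nc_eval Rsmul gen_var (f - g) = (0 :: 'a cpoly mat2)"
    using assms by (simp add: nc_eval_diff[OF d_algebra_Rsmul])
  then have "f - g \<in> weak_ids smul (L \<inter> A0) (L \<inter> A1)"
    using identities nc_eval_gen_var_zero_imp_weak_id by blast
  then have "nc_eval smul (case_xvar a b) (f - g) = 0"
    using even_gens odd_gens by (simp add: weak_ids_def)
  then show ?thesis
    by (simp add: nc_eval_diff[OF d_algebra_smul])
qed

definition induced_hom :: "'a cpoly mat2 \<Rightarrow> 'b" where
  "induced_hom x = (THE y. \<exists>f. x = nc_eval Rsmul gen_var f \<and> y = nc_eval smul (case_xvar a b) f)"

lemma induced_hom_nc_eval: "induced_hom (nc_eval Rsmul gen_var f) = nc_eval smul (case_xvar a b) f"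
  unfolding induced_hom_def by (rule the_equality) (auto intro: nc_eval_well_defined)

lemma induced_hom_add:
  assumes "x \<in> genR" "y \<in> genR"
  shows "induced_hom (x + y) = induced_hom x + induced_hom y"
proof -
  obtain f g where "x = nc_eval Rsmul gen_var f" "y = nc_eval Rsmul gen_var g"
    using assms genR_eq_nc_eval by metis
  then show ?thesis
    by (simp add: nc_eval_add[OF d_algebra_Rsmul, symmetric] nc_eval_add[OF d_algebra_smul] induced_hom_nc_eval)
qed

lemma induced_hom_diff:
  assumes "x \<in> genR" "y \<in> genR"
  shows "induced_hom (x - y) = induced_hom x - induced_hom y"
proof -
  obtain f g where "x = nc_eval Rsmul gen_var f" "y = nc_eval Rsmul gen_var g"
    using assms genR_eq_nc_eval by metis
  then show ?thesis
    by (simp add: nc_eval_diff[OF d_algebra_Rsmul, symmetric] nc_eval_diff[OF d_algebra_smul] induced_hom_nc_eval)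
qed

lemma induced_hom_mult:
  assumes "x \<in> genR" "y \<in> genR"
  shows "induced_hom (x * y) = induced_hom x * induced_hom y"
proof -
  obtain f g where "x = nc_eval Rsmul gen_var f" "y = nc_eval Rsmul gen_var g"
    using assms genR_eq_nc_eval by metis
  then show ?thesis
    by (simp add: nc_eval_mult[OF d_algebra_Rsmul, symmetric] nc_eval_mult[OF d_algebra_smul] induced_hom_nc_eval)
qed

lemma induced_hom_scale:
  assumes "x \<in> genR"
  shows "induced_hom (Rsmul c x) = smul c (induced_hom x)"
proof -
  obtain f where "x = nc_eval Rsmul gen_var f"
    using assms genR_eq_nc_eval by metis
  then show ?thesis
    by (simp add: nc_eval_const_mult[OF d_algebra_Rsmul, symmetric] nc_eval_const_mult[OF d_algebra_smul]
        induced_hom_nc_eval)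
qed

lemma induced_hom_one: "induced_hom 1 = 1"
  using induced_hom_nc_eval[of "Poly_Mapping.single [] 1"]
  by (simp add: nc_eval_one[OF d_algebra_Rsmul] nc_eval_one[OF d_algebra_smul])

lemma induced_hom_genY: "induced_hom (genY i) = a i"
  using induced_hom_nc_eval[of "Poly_Mapping.single [Yv i] 1"]
  by (simp add: nc_eval_var[OF d_algebra_Rsmul] nc_eval_var[OF d_algebra_smul])

lemma induced_hom_genZ: "induced_hom (genZ i) = b i"
  using induced_hom_nc_eval[of "Poly_Mapping.single [Zv i] 1"]
  by (simp add: nc_eval_var[OF d_algebra_Rsmul] nc_eval_var[OF d_algebra_smul])

lemma graded_hom_induced_hom: "graded_hom_R smul A0 A1 induced_hom"
proof -
  have "induced_hom x \<in> A0" if "x \<in> genR0" for x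
    using genR0_homogeneous_rep[OF that] even_gens odd_gens
    by (auto simp: induced_hom_nc_eval intro!: nc_eval_homogeneous(1)[OF graded_algebra_A])
  moreover have "induced_hom x \<in> A1" if "x \<in> genR1" for x
    using genR1_homogeneous_rep[OF that] even_gens odd_gens
    by (auto simp: induced_hom_nc_eval intro!: nc_eval_homogeneous(2)[OF graded_algebra_A])
  ultimately show ?thesis
    by (auto simp: graded_hom_R_def induced_hom_add induced_hom_mult induced_hom_scale induced_hom_one)
qed

lemma induced_hom_genS: "induced_hom ` genS \<subseteq> L"
proof
  have L: "d_submodule smul L" "\<And>x y. x \<in> L \<Longrightarrow> y \<in> L \<Longrightarrow> x * y - y * x \<in> L"
    using graded_pair by (simp_all add: graded_pair_def)
  fix y assume "y \<in> induced_hom ` genS"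
  then obtain x where "x \<in> genS" and y: "y = induced_hom x" by blast
  from \<open>x \<in> genS\<close> show "y \<in> L" unfolding y
  proof (induction rule: genS.induct)
    case (bracket x y)
    then have "x \<in> genR" "y \<in> genR"
      using genS_subset_genR by auto
    then have "induced_hom (x * y - y * x) = induced_hom x * induced_hom y - induced_hom y * induced_hom x"
      by (simp add: induced_hom_diff induced_hom_mult genR.mult)
    then show ?case
      using L(2) bracket.IH by simp
  next
    case (add x y)
    then show ?case
      using L(1) by (simp add: genS_subset_genR induced_hom_add d_submodule_def)
  next
    case (smul x c)
    then show ?case
      using L(1) by (simp add: genS_subset_genR induced_hom_scale d_submodule_def)
  qed (use even_gens odd_gens in \<open>simp_all add: induced_hom_genY induced_hom_genZ\<close>)
qed

lemma graded_hom_unique: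
  assumes "graded_hom_R smul A0 A1 \<phi>" "\<And>i. \<phi> (genY i) = a i" "\<And>i. \<phi> (genZ i) = b i"
  shows "x \<in> genR \<Longrightarrow> \<phi> x = induced_hom x"
  by (induction rule: genR.induct)
     (use assms in \<open>simp_all add: graded_hom_R_def induced_hom_one induced_hom_genY induced_hom_genZ
       induced_hom_add induced_hom_mult induced_hom_scale\<close>)


lemma universal_property:
  "\<exists>\<psi>. graded_hom_R smul A0 A1 \<psi> \<and> (\<forall>i. \<psi> (genY i) = a i) \<and> (\<forall>i. \<psi> (genZ i) = b i) \<and>
      \<psi> ` genS \<subseteq> L \<and>
      (\<forall>\<phi>. graded_hom_R smul A0 A1 \<phi> \<and> (\<forall>i. \<phi> (genY i) = a i) \<and> (\<forall>i. \<phi> (genZ i) = b i)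
        \<longrightarrow> (\<forall>x\<in>genR. \<phi> x = \<psi> x))"
  using graded_hom_induced_hom induced_hom_genY induced_hom_genZ induced_hom_genS graded_hom_unique
  by blast

end

theorem mainTheorem1:
  fixes D_witness :: "'a::idom itself"
  assumes "infinite (UNIV :: 'a set)"
  shows "weak_ids (mat2_scale :: 'a \<Rightarrow> 'a mat2 \<Rightarrow> 'a mat2) (sl2 \<inter> diag2) (sl2 \<inter> offdiag2)
           \<subseteq> weak_ids (Rsmul :: 'a \<Rightarrow> 'a cpoly mat2 \<Rightarrow> 'a cpoly mat2)
                (genS \<inter> genR0) (genS \<inter> genR1)
         \<and> (\<forall>(smul :: 'a \<Rightarrow> 'b::ring_1 \<Rightarrow> 'b) A0 A1 L a b.
           graded_pair smul A0 A1 L \<and>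
           weak_ids (mat2_scale :: 'a \<Rightarrow> 'a mat2 \<Rightarrow> 'a mat2) (sl2 \<inter> diag2) (sl2 \<inter> offdiag2)
             \<subseteq> weak_ids smul (L \<inter> A0) (L \<inter> A1) \<and>
           (\<forall>i. a i \<in> L \<inter> A0) \<and> (\<forall>i. b i \<in> L \<inter> A1) \<longrightarrow>
           (\<exists>\<psi>. graded_hom_R smul A0 A1 \<psi> \<and> (\<forall>i. \<psi> (genY i) = a i) \<and> (\<forall>i. \<psi> (genZ i) = b i) \<and>
               \<psi> ` genS \<subseteq> L \<and>
               (\<forall>\<phi>. graded_hom_R smul A0 A1 \<phi> \<and> (\<forall>i. \<phi> (genY i) = a i) \<and> (\<forall>i. \<phi> (genZ i) = b i)
                    \<longrightarrow> (\<forall>x\<in>genR. \<phi> x = \<psi> x))))"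
  using weak_ids_M2_subset_weak_ids_RS[OF assms] M2_identity_pair.universal_property
  unfolding M2_identity_pair_def by blast

end
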